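(* Under the positivity assumption, if $\boldsymbol{S}_1$ and $\boldsymbol{S}_2$ are stable variable sets of $Y$ under $P^{\text{tr}}$, then $\boldsymbol{S}_1\cap\boldsymbol{S}_2$ is also a stable variable set of $Y$ under $P^{\text{tr}}$.
   Context: $\boldsymbol{X}=(X_1,\dots,X_d)^T\in\mathbb{R}^d$ features and $Y\in\mathbb{R}$ outcome with joint training distribution $P^{\text{tr}}(\boldsymbol{X},Y)$ (given by a density), $\mathcal{X}_j$ the support of $X_j$. Positivity assumption: for all $x_j\in\mathcal{X}_j$, $P^{\text{tr}}(X_1=x_1,\dots,X_d=x_d)>0$. A subset $\boldsymbol{S}\subseteq\boldsymbol{X}$ is a stable variable set of $Y$ under $P^{\text{tr}}$ if $\mathbb{E}_{P^{\text{tr}}}[Y\mid\boldsymbol{S}]=\mathbb{E}_{P^{\text{tr}}}[Y\mid\boldsymbol{X}]$ (the empty set is allowed, with $\mathbb{E}[Y\mid\emptyset]=\mathbb{E}[Y]$). *)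

theory Defs
  imports "HOL-Probability.Probability"
begin

definition feature_vec :: "(nat \<Rightarrow> 'a \<Rightarrow> real) \<Rightarrow> nat set \<Rightarrow> 'a \<Rightarrow> (nat \<Rightarrow> real)" where
  "feature_vec X S = (\<lambda>\<omega>. restrict (\<lambda>j. X j \<omega>) S)"

text \<open>sigma-algebra on the sample space generated by the features indexed by S
  (trivial algebra for S empty).\<close>
definition feat_alg :: "'a measure \<Rightarrow> (nat \<Rightarrow> 'a \<Rightarrow> real) \<Rightarrow> nat set \<Rightarrow> 'a measure" where
  "feat_alg M X S = vimage_algebra (space M) (feature_vec X S) (PiM S (\<lambda>_. borel :: real measure))"

definition stable_set :: "'a measure \<Rightarrow> (nat \<Rightarrow> 'a \<Rightarrow> real) \<Rightarrow> nat \<Rightarrow> ('a \<Rightarrow> real) \<Rightarrow> nat set \<Rightarrow> bool" where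
  "stable_set M X d Y S \<longleftrightarrow> S \<subseteq> {..<d} \<and>
     (AE \<omega> in M. real_cond_exp M (feat_alg M X S) Y \<omega> = real_cond_exp M (feat_alg M X {..<d}) Y \<omega>)"

definition rv_support :: "'a measure \<Rightarrow> ('a \<Rightarrow> real) \<Rightarrow> real set" where
  "rv_support M Z = {x. \<forall>e>0. measure (distr M borel Z) (ball x e) > 0}"

end

theory Submission
  imports Defs
begin

(* Write Z for E[Y | X_S1], which equals E[Y | X_S2] almost surely. Every level set of Z is then,
   up to a null set, an event of X_S1 as well as an event of X_S2. The density of X is positive
   on the product of the supports of the X_j, and each support has positive Lebesgue measure;
   so by Fubini the coordinates in S2 - S1 can be frozen at a generic point of that box, which
   turns the X_S2-description into one that only involves X_(S1 Int S2). Hence Z is almost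
   surely X_(S1 Int S2)-measurable, and the tower property gives
   E[Y | X_(S1 Int S2)] = E[Z | X_(S1 Int S2)] = Z = E[Y | X]. *)

lemma AE_obtain_in_non_null:
  assumes "AE x in M. P x" and "emeasure M A \<noteq> 0" and "A \<in> sets M"
  obtains x where "x \<in> A" and "P x"
proof -
  from assms(1) obtain N where N: "{x \<in> space M. \<not> P x} \<subseteq> N" "emeasure M N = 0" "N \<in> sets M"
    by (rule AE_E)
  have "\<not> A \<subseteq> N"
    using emeasure_mono[of A N M] N assms(2) by auto
  then show ?thesis
    using that N(1) sets.sets_into_space[OF assms(3)] by blast
qed

lemma restrict_merge_subset:
  assumes "J \<inter> L = {}" and "S \<subseteq> L"
  shows "restrict (merge J L (b, y)) S = restrict y S"
  using assms by (auto simp: merge_def restrict_def fun_eq_iff)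

lemma restrict_merge_Un_subset:
  assumes "J \<inter> L = {}" and "T \<subseteq> L"
  shows "restrict (merge J L (b, y)) (J \<union> T) = merge J T (b, restrict y T)"
  using assms by (auto simp: merge_def restrict_def fun_eq_iff)

lemma (in product_sigma_finite) AE_PiM_merge_iff:
  assumes "I \<inter> J = {}" "finite I" "finite J" and [measurable]: "Measurable.pred (PiM (I \<union> J) M) P"
  shows "(AE x in PiM (I \<union> J) M. P x) \<longleftrightarrow> (AE x in PiM I M. AE y in PiM J M. P (merge I J (x, y)))"
proof -
  interpret I: finite_product_sigma_finite M I by standard fact
  interpret J: finite_product_sigma_finite M J by standard fact
  interpret pair_sigma_finite "PiM I M" "PiM J M" ..
  have "(AE x in PiM (I \<union> J) M. P x) \<longleftrightarrow>
      (AE x in distr (PiM I M \<Otimes>\<^sub>M PiM J M) (PiM (I \<union> J) M) (merge I J). P x)"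
    by (simp only: distr_merge[OF assms(1-3)])
  also have "\<dots> \<longleftrightarrow> (AE z in PiM I M \<Otimes>\<^sub>M PiM J M. P (merge I J z))"
    by (simp add: AE_distr_iff)
  also have "\<dots> \<longleftrightarrow> (AE x in PiM I M. AE y in PiM J M. P (merge I J (x, y)))"
    by (subst AE_pair_iff) auto
  finally show ?thesis .
qed

lemma (in product_sigma_finite) AE_PiM_obtain_slice:
  assumes "J \<inter> L = {}" "finite J" "finite L"
    and K: "\<And>i. i \<in> J \<Longrightarrow> K i \<in> sets (M i)" "\<And>i. i \<in> J \<Longrightarrow> emeasure (M i) (K i) \<noteq> 0"
    and "Measurable.pred (PiM (J \<union> L) M) P" and "AE x in PiM (J \<union> L) M. P x"
  obtains b where "b \<in> PiE J K" and "AE y in PiM L M. P (merge J L (b, y))"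
proof -
  have "AE b in PiM J M. AE y in PiM L M. P (merge J L (b, y))"
    using assms(7) by (subst (asm) AE_PiM_merge_iff[OF assms(1-3,6)])
  moreover have "emeasure (PiM J M) (PiE J K) \<noteq> 0"
    using K assms(2) by (subst emeasure_PiM) (auto simp: prod_zero_iff)
  moreover have "PiE J K \<in> sets (PiM J M)"
    using K assms(2) by (intro sets_PiM_I_finite) auto
  ultimately show ?thesis
    using that by (rule AE_obtain_in_non_null)
qed

lemma (in product_sigma_finite) AE_PiM_restrict:
  assumes "J \<inter> L = {}" "finite J" "finite L"
    and [measurable]: "Measurable.pred (PiM L M) Q" and "AE y in PiM L M. Q y"
  shows "AE x in PiM (J \<union> L) M. Q (restrict x L)"
proof -
  have "AE b in PiM J M. AE y in PiM L M. Q (restrict (merge J L (b, y)) L)"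
  proof (rule AE_I2)
    show "AE y in PiM L M. Q (restrict (merge J L (b, y)) L)" for b
      using assms(5) AE_space by eventually_elim (simp add: assms(1) space_PiM PiE_restrict)
  qed
  then show ?thesis
    by (subst AE_PiM_merge_iff[OF assms(1-3)]) measurable
qed

lemma (in product_sigma_finite) AE_PiE_freeze_coordinates:
  assumes JL: "J \<inter> L = {}" "finite J" "finite L" and "S \<subseteq> L" "T \<subseteq> L"
    and K: "\<And>i. i \<in> J \<union> L \<Longrightarrow> K i \<in> sets (M i)" "\<And>i. i \<in> J \<Longrightarrow> emeasure (M i) (K i) \<noteq> 0"
    and [measurable]: "A \<in> sets (PiM S M)" "B \<in> sets (PiM (J \<union> T) M)"
    and AB: "AE x in PiM (J \<union> L) M. x \<in> PiE (J \<union> L) K \<longrightarrow>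
      (restrict x S \<in> A \<longleftrightarrow> restrict x (J \<union> T) \<in> B)"
  shows "\<exists>C \<in> sets (PiM T M). AE x in PiM (J \<union> L) M.
           x \<in> PiE (J \<union> L) K \<longrightarrow> (restrict x S \<in> A \<longleftrightarrow> restrict x T \<in> C)"
proof -
  have box_sets [measurable]: "PiE (J \<union> L) K \<in> sets (PiM (J \<union> L) M)" "PiE J K \<in> sets (PiM J M)"
    "PiE L K \<in> sets (PiM L M)"
    using K JL by (auto intro!: sets_PiM_I_finite)
  have [measurable]: "(\<lambda>x. restrict x S) \<in> measurable (PiM (J \<union> L) M) (PiM S M)"
    "(\<lambda>x. restrict x (J \<union> T)) \<in> measurable (PiM (J \<union> L) M) (PiM (J \<union> T) M)"
    "(\<lambda>y. restrict y S) \<in> measurable (PiM L M) (PiM S M)"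
    "(\<lambda>y. restrict y T) \<in> measurable (PiM L M) (PiM T M)"
    using assms(4,5) by (auto intro!: measurable_restrict_subset)
  define P where "P x \<longleftrightarrow> x \<in> PiE (J \<union> L) K \<longrightarrow> (restrict x S \<in> A \<longleftrightarrow> restrict x (J \<union> T) \<in> B)" for x
  have P_meas: "Measurable.pred (PiM (J \<union> L) M) P"
    unfolding P_def by measurable
  have P_AE: "AE x in PiM (J \<union> L) M. P x"
    using AB by (simp add: P_def)
  obtain b where b: "b \<in> PiE J K" and b_AE: "AE y in PiM L M. P (merge J L (b, y))"
    by (rule AE_PiM_obtain_slice[where K = K, OF JL _ _ P_meas P_AE]) (use K in auto)
  then have "b \<in> space (PiM J M)"
    using sets.sets_into_space[OF box_sets(2)] by blast
  then have [measurable]: "(\<lambda>c. merge J T (b, c)) \<in> measurable (PiM T M) (PiM (J \<union> T) M)"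
    by (intro measurable_compose[OF measurable_Pair measurable_merge] measurable_const
        measurable_ident_sets) auto
  define C where "C = (\<lambda>c. merge J T (b, c)) -` B \<inter> space (PiM T M)"
  have C [measurable]: "C \<in> sets (PiM T M)"
    unfolding C_def by measurable
  have "AE y in PiM L M. y \<in> PiE L K \<longrightarrow> (restrict y S \<in> A \<longleftrightarrow> restrict y T \<in> C)"
    using b_AE AE_space
  proof eventually_elim
    case (elim y)
    show ?case
    proof
      assume "y \<in> PiE L K"
      then have "merge J L (b, y) \<in> PiE (J \<union> L) K"
        using b JL by simp (simp add: PiE_iff Pi_iff)
      moreover have "restrict y T \<in> space (PiM T M)"
        using elim(2) assms(5) by (auto simp: space_PiM)
      ultimately show "restrict y S \<in> A \<longleftrightarrow> restrict y T \<in> C"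
        using elim(1) assms(4,5) JL
        by (simp add: P_def C_def restrict_merge_subset restrict_merge_Un_subset)
    qed
  qed
  then have "AE x in PiM (J \<union> L) M. restrict x L \<in> PiE L K \<longrightarrow>
      (restrict (restrict x L) S \<in> A \<longleftrightarrow> restrict (restrict x L) T \<in> C)"
    by (rule AE_PiM_restrict[OF JL, rotated]) measurable
  then have "AE x in PiM (J \<union> L) M. x \<in> PiE (J \<union> L) K \<longrightarrow> (restrict x S \<in> A \<longleftrightarrow> restrict x T \<in> C)"
    by (rule eventually_mono) (use assms(4,5) in \<open>auto simp: PiE_iff Int_absorb1\<close>)
  with C show ?thesis
    by blast
qed

lemma (in product_sigma_finite) AE_PiE_restrict_iff_Int:
  assumes "finite I" "S1 \<subseteq> I" "S2 \<subseteq> I"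
    and "\<And>i. i \<in> I \<Longrightarrow> K i \<in> sets (M i)" "\<And>i. i \<in> I \<Longrightarrow> emeasure (M i) (K i) \<noteq> 0"
    and "A \<in> sets (PiM S1 M)" "B \<in> sets (PiM S2 M)"
    and "AE x in PiM I M. x \<in> PiE I K \<longrightarrow> (restrict x S1 \<in> A \<longleftrightarrow> restrict x S2 \<in> B)"
  shows "\<exists>C \<in> sets (PiM (S1 \<inter> S2) M). AE x in PiM I M.
           x \<in> PiE I K \<longrightarrow> (restrict x S1 \<in> A \<longleftrightarrow> restrict x (S1 \<inter> S2) \<in> C)"
proof -
  define J where "J = S2 - S1"
  define L where "L = I - J"
  have I: "I = J \<union> L" and S2: "S2 = J \<union> (S1 \<inter> S2)"
    using assms(3) by (auto simp: J_def L_def)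
  have "J \<inter> L = {}" "finite J" "finite L" "S1 \<subseteq> L" "S1 \<inter> S2 \<subseteq> L"
    using assms(1-3) by (auto simp: J_def L_def intro: finite_subset)
  moreover have "B \<in> sets (PiM (J \<union> (S1 \<inter> S2)) M)"
    using assms(7) unfolding S2[symmetric] .
  moreover have "AE x in PiM (J \<union> L) M. x \<in> PiE (J \<union> L) K \<longrightarrow>
      (restrict x S1 \<in> A \<longleftrightarrow> restrict x (J \<union> (S1 \<inter> S2)) \<in> B)"
    using assms(8) unfolding I[symmetric] S2[symmetric] .
  ultimately show ?thesis
    using assms(4-6) unfolding I by (intro AE_PiE_freeze_coordinates) auto
qed

lemma closed_rv_support:
  assumes "prob_space M" and "Z \<in> borel_measurable M"
  shows "closed (rv_support M Z)"
proof -
  interpret prob_space "distr M borel Z"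
    using assms by (rule prob_space.prob_space_distr)
  have "open (- rv_support M Z)"
  proof (rule openI)
    fix x assume "x \<in> - rv_support M Z"
    then obtain e where e: "e > 0" and "\<not> measure (distr M borel Z) (ball x e) > 0"
      by (auto simp: rv_support_def)
    then have null: "measure (distr M borel Z) (ball x e) = 0"
      using measure_nonneg[of "distr M borel Z" "ball x e"] by linarith
    have "ball x e \<subseteq> - rv_support M Z"
    proof
      fix y assume "y \<in> ball x e"
      then obtain e' where e': "e' > 0" "ball y e' \<subseteq> ball x e"
        by (meson openE open_ball)
      then have "measure (distr M borel Z) (ball y e') \<le> measure (distr M borel Z) (ball x e)"
        by (intro finite_measure_mono) auto
      then have "measure (distr M borel Z) (ball y e') = 0"
        using null measure_nonneg[of "distr M borel Z" "ball y e'"] by linarith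
      then show "y \<in> - rv_support M Z"
        using e' by (auto simp: rv_support_def)
    qed
    with e show "\<exists>e>0. ball x e \<subseteq> - rv_support M Z"
      by blast
  qed
  then show ?thesis
    by (simp add: closed_def)
qed

lemma AE_in_rv_support:
  assumes "prob_space M" and "Z \<in> borel_measurable M"
  shows "AE \<omega> in M. Z \<omega> \<in> rv_support M Z"
proof -
  let ?\<mu> = "distr M borel Z"
  interpret \<mu>: prob_space ?\<mu>
    using assms by (rule prob_space.prob_space_distr)
  define \<F> where "\<F> = {ball x e | x e. e > 0 \<and> measure ?\<mu> (ball x e) = 0}"
  obtain \<F>' where \<F>': "\<F>' \<subseteq> \<F>" "countable \<F>'" "\<Union>\<F>' = \<Union>\<F>"
    by (rule Lindelof_openin[of \<F> UNIV]) (auto simp: \<F>_def)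
  have "(\<Union>B\<in>\<F>'. B) \<in> null_sets ?\<mu>"
  proof (rule null_sets_UN')
    fix B assume "B \<in> \<F>'"
    then obtain x e where "B = ball x e" "measure ?\<mu> (ball x e) = 0"
      using \<F>'(1) by (auto simp: \<F>_def)
    then show "B \<in> null_sets ?\<mu>"
      by (simp add: null_sets_def \<mu>.emeasure_eq_measure)
  qed (fact \<F>'(2))
  then have null: "AE x in ?\<mu>. x \<notin> (\<Union>B\<in>\<F>'. B)"
    by (rule AE_not_in)
  have cover: "- rv_support M Z \<subseteq> \<Union>\<F>"
  proof
    fix x assume "x \<in> - rv_support M Z"
    then obtain e where "e > 0" and "\<not> measure ?\<mu> (ball x e) > 0"
      by (auto simp: rv_support_def)
    then have "measure ?\<mu> (ball x e) = 0"
      using measure_nonneg[of ?\<mu> "ball x e"] by linarith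
    with \<open>e > 0\<close> have "ball x e \<in> \<F>"
      unfolding \<F>_def by blast
    with \<open>e > 0\<close> show "x \<in> \<Union>\<F>"
      by (intro UnionI[of "ball x e"]) auto
  qed
  from null have "AE x in ?\<mu>. x \<in> rv_support M Z"
    by eventually_elim (use cover \<F>'(3) in blast)
  then show ?thesis
    using closed_rv_support[OF assms] assms(2) by (subst (asm) AE_distr_iff) auto
qed

lemma (in sigma_finite_subalgebra) real_cond_exp_mono_on:
  assumes "C \<in> sets F" and "AE x in M. x \<in> C \<longrightarrow> f x \<le> g x"
    and [measurable]: "integrable M f" "integrable M g"
  shows "AE x in M. x \<in> C \<longrightarrow> real_cond_exp M F f x \<le> real_cond_exp M F g x"
proof -
  have C_M [measurable]: "C \<in> sets M"
    using assms(1) subalg by (auto simp: subalgebra_def)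
  have integrable_C: "integrable M (\<lambda>x. indicator C x * h x)"
    if "integrable M h" for h :: "'a \<Rightarrow> real"
    using integrable_mult_indicator[OF C_M that] by simp
  have localize: "AE x in M. real_cond_exp M F (\<lambda>x. indicator C x * h x) x =
      indicator C x * real_cond_exp M F h x"
    if "integrable M h" for h :: "'a \<Rightarrow> real"
    using that integrable_C[OF that] assms(1) by (intro real_cond_exp_mult) auto
  have "AE x in M. real_cond_exp M F (\<lambda>x. indicator C x * f x) x \<le>
      real_cond_exp M F (\<lambda>x. indicator C x * g x) x"
    using assms(2) integrable_C[OF assms(3)] integrable_C[OF assms(4)]
    by (intro real_cond_exp_mono) (auto simp: indicator_def elim: AE_mp)
  with localize[OF assms(3)] localize[OF assms(4)] show ?thesis
    by eventually_elim (auto simp: indicator_def)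
qed

lemma (in finite_measure_subalgebra) real_cond_exp_F_meas_AE:
  assumes [measurable]: "integrable M f"
    and levels: "\<And>B. B \<in> sets borel \<Longrightarrow> \<exists>C \<in> sets F. AE x in M. f x \<in> B \<longleftrightarrow> x \<in> C"
  shows "AE x in M. real_cond_exp M F f x = f x"
proof -
  let ?E = "real_cond_exp M F f"
  have "AE x in M. (r < f x \<longrightarrow> r \<le> ?E x) \<and> (f x \<le> r \<longrightarrow> ?E x \<le> r)" for r
  proof -
    obtain C where C: "C \<in> sets F" and fC: "AE x in M. f x \<in> {r<..} \<longleftrightarrow> x \<in> C"
      using levels[of "{r<..}"] by auto
    have C_compl: "space M - C \<in> sets F"
      using C subalg by (metis sets.compl_sets subalgebra_def)
    have "AE x in M. real_cond_exp M F (\<lambda>_. r) x = r"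
      by (intro real_cond_exp_F_meas) auto
    moreover have "AE x in M. x \<in> C \<longrightarrow> real_cond_exp M F (\<lambda>_. r) x \<le> ?E x"
      using fC by (intro real_cond_exp_mono_on[OF C]) (auto simp: assms(1))
    moreover have "AE x in M. x \<in> space M - C \<longrightarrow> ?E x \<le> real_cond_exp M F (\<lambda>_. r) x"
      using fC by (intro real_cond_exp_mono_on[OF C_compl]) (auto simp: assms(1))
    ultimately show ?thesis
      using fC AE_space by eventually_elim auto
  qed
  then have "AE x in M. \<forall>r\<in>\<rat>. (r < f x \<longrightarrow> r \<le> ?E x) \<and> (f x \<le> r \<longrightarrow> ?E x \<le> r)"
    by (intro AE_ball_countable') (auto simp: countable_rat)
  then show ?thesis
  proof eventually_elim
    case (elim x)
    have False if "?E x < f x"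
      using Rats_dense_in_real[OF that] elim by force
    moreover have False if "f x < ?E x"
      using Rats_dense_in_real[OF that] elim by force
    ultimately show ?case
      by (cases "?E x" "f x" rule: linorder_cases) auto
  qed
qed

lemma measurable_feature_vec:
  assumes "\<And>j. j \<in> S \<Longrightarrow> X j \<in> borel_measurable M"
  shows "feature_vec X S \<in> measurable M (PiM S (\<lambda>_. borel))"
  unfolding feature_vec_def using assms by (rule measurable_restrict)

lemma restrict_feature_vec:
  "S \<subseteq> T \<Longrightarrow> restrict (feature_vec X T \<omega>) S = feature_vec X S \<omega>"
  by (auto simp: feature_vec_def fun_eq_iff)

lemma space_feat_alg [simp]: "space (feat_alg M X S) = space M"
  by (simp add: feat_alg_def)

lemma sets_feat_alg:
  assumes "\<And>j. j \<in> S \<Longrightarrow> X j \<in> borel_measurable M"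
  shows "sets (feat_alg M X S) = {feature_vec X S -` A \<inter> space M | A. A \<in> sets (PiM S (\<lambda>_. borel))}"
  unfolding feat_alg_def
  using measurable_space[OF measurable_feature_vec[OF assms]] by (intro sets_vimage_algebra2) auto

lemma subalgebra_feat_alg:
  assumes "\<And>j. j \<in> S \<Longrightarrow> X j \<in> borel_measurable M"
  shows "subalgebra M (feat_alg M X S)"
  using measurable_feature_vec[OF assms]
  by (simp add: subalgebra_def feat_alg_def measurable_iff_sets)

lemma subalgebra_feat_alg_mono:
  assumes "S \<subseteq> T" and "\<And>j. j \<in> T \<Longrightarrow> X j \<in> borel_measurable M"
  shows "subalgebra (feat_alg M X T) (feat_alg M X S)"
proof -
  have "feature_vec X T \<in> measurable (feat_alg M X T) (PiM T (\<lambda>_. borel))"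
    unfolding feat_alg_def
    using measurable_space[OF measurable_feature_vec[OF assms(2)]]
    by (intro measurable_vimage_algebra1) auto
  then have "(\<lambda>\<omega>. restrict (feature_vec X T \<omega>) S) \<in> measurable (feat_alg M X T) (PiM S (\<lambda>_. borel))"
    using measurable_restrict_subset[OF assms(1)] by (rule measurable_compose)
  then have "feature_vec X S \<in> measurable (feat_alg M X T) (PiM S (\<lambda>_. borel))"
    by (simp add: restrict_feature_vec[OF assms(1)])
  then show ?thesis
    by (simp add: subalgebra_def measurable_iff_sets feat_alg_def)
qed

lemma (in prob_space) AE_distributed_iff_on:
  assumes "distributed M N V p" and [measurable]: "K \<in> sets N" "Measurable.pred N P"
    and "AE \<omega> in M. V \<omega> \<in> K" and "\<And>x. x \<in> K \<Longrightarrow> 0 < p x"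
  shows "(AE \<omega> in M. P (V \<omega>)) \<longleftrightarrow> (AE x in N. x \<in> K \<longrightarrow> P x)"
proof -
  have "(AE \<omega> in M. P (V \<omega>)) \<longleftrightarrow> (AE \<omega> in M. V \<omega> \<in> K \<longrightarrow> P (V \<omega>))"
    using assms(4) by (auto elim: AE_mp)
  also have "\<dots> \<longleftrightarrow> (AE x in N. 0 < p x \<longrightarrow> x \<in> K \<longrightarrow> P x)"
    using assms(1) by (rule distributed_AE2) measurable
  also have "\<dots> \<longleftrightarrow> (AE x in N. x \<in> K \<longrightarrow> P x)"
    using assms(5) by (intro AE_cong) blast
  finally show ?thesis .
qed

locale positive_feature_density = prob_space M for M :: "'a measure" +
  fixes X :: "nat \<Rightarrow> 'a \<Rightarrow> real" and d :: nat and p :: "(nat \<Rightarrow> real) \<Rightarrow> ennreal"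
  assumes X_measurable: "\<And>j. j < d \<Longrightarrow> X j \<in> borel_measurable M"
    and X_density: "distributed M (PiM {..<d} (\<lambda>_. lborel)) (feature_vec X {..<d}) p"
    and positivity: "\<forall>x \<in> PiE {..<d} (\<lambda>j. rv_support M (X j)). p x > 0"
begin

abbreviation support_box :: "(nat \<Rightarrow> real) set" where
  "support_box \<equiv> PiE {..<d} (\<lambda>j. rv_support M (X j))"

lemma sets_rv_support: "j < d \<Longrightarrow> rv_support M (X j) \<in> sets borel"
  using closed_rv_support[OF prob_space_axioms X_measurable] by (rule borel_closed)

lemma sets_support_box: "support_box \<in> sets (PiM {..<d} (\<lambda>_. lborel))"
  using sets_rv_support by (intro sets_PiM_I_finite) auto

lemma AE_feature_vec_in_support_box: "AE \<omega> in M. feature_vec X {..<d} \<omega> \<in> support_box"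
proof -
  have "AE \<omega> in M. \<forall>j\<in>{..<d}. X j \<omega> \<in> rv_support M (X j)"
    using AE_in_rv_support[OF prob_space_axioms X_measurable] by (intro AE_finite_allI) auto
  then show ?thesis
    by eventually_elim (auto simp: feature_vec_def)
qed

lemma AE_feature_vec_iff:
  assumes "Measurable.pred (PiM {..<d} (\<lambda>_. lborel)) P"
  shows "(AE \<omega> in M. P (feature_vec X {..<d} \<omega>)) \<longleftrightarrow>
    (AE x in PiM {..<d} (\<lambda>_. lborel). x \<in> support_box \<longrightarrow> P x)"
  using positivity AE_distributed_iff_on[OF X_density sets_support_box assms AE_feature_vec_in_support_box]
  by blast

lemma emeasure_rv_support_nonzero:
  assumes "j < d"
  shows "emeasure lborel (rv_support M (X j)) \<noteq> 0"
proof
  assume null: "emeasure lborel (rv_support M (X j)) = 0"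
  define T where "T = PiE {..<d} (\<lambda>i. if i = j then rv_support M (X j) else UNIV)"
  have T: "T \<in> sets (PiM {..<d} (\<lambda>_. lborel))"
    unfolding T_def using sets_rv_support[OF assms] by (intro sets_PiM_I_finite) auto
  have "emeasure (PiM {..<d} (\<lambda>_. lborel)) T = 0"
    unfolding T_def using sets_rv_support[OF assms] null assms
    by (subst product_sigma_finite.emeasure_PiM) (auto simp: product_sigma_finite_def prod_zero_iff
        lborel.sigma_finite_measure_axioms)
  then have "AE x in PiM {..<d} (\<lambda>_. lborel). x \<notin> T"
    using T by (intro AE_not_in null_setsI)
  then have "AE x in PiM {..<d} (\<lambda>_. lborel). x \<in> support_box \<longrightarrow> x \<notin> T"
    by eventually_elim blast
  moreover have "Measurable.pred (PiM {..<d} (\<lambda>_. lborel)) (\<lambda>x. x \<notin> T)"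
    using T by measurable
  ultimately have "AE \<omega> in M. feature_vec X {..<d} \<omega> \<notin> T"
    using AE_feature_vec_iff[of "\<lambda>x. x \<notin> T"] by blast
  moreover have "support_box \<subseteq> T"
    unfolding T_def by (rule PiE_mono) auto
  with AE_feature_vec_in_support_box have "AE \<omega> in M. feature_vec X {..<d} \<omega> \<in> T"
    by (auto elim: eventually_mono)
  ultimately have "AE \<omega> in M. False"
    by eventually_elim blast
  then show False
    by simp
qed

lemma sets_feat_alg_restrict:
  assumes "S \<subseteq> {..<d}"
  shows "sets (feat_alg M X S) =
    {{\<omega> \<in> space M. restrict (feature_vec X {..<d} \<omega>) S \<in> A} | A. A \<in> sets (PiM S (\<lambda>_. lborel))}"
proof -
  have "sets (PiM S (\<lambda>_. lborel)) = sets (PiM S (\<lambda>_. borel :: real measure))"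
    by (rule sets_PiM_cong) auto
  moreover have "feature_vec X S -` A \<inter> space M =
      {\<omega> \<in> space M. restrict (feature_vec X {..<d} \<omega>) S \<in> A}" for A
    using assms by (auto simp: restrict_feature_vec)
  ultimately show ?thesis
    using assms X_measurable by (subst sets_feat_alg) auto
qed

lemma feat_alg_Int_AE_eq:
  assumes S: "S1 \<subseteq> {..<d}" "S2 \<subseteq> {..<d}"
    and A: "A \<in> sets (feat_alg M X S1)" and B: "B \<in> sets (feat_alg M X S2)"
    and AB: "AE \<omega> in M. \<omega> \<in> A \<longleftrightarrow> \<omega> \<in> B"
  shows "\<exists>C \<in> sets (feat_alg M X (S1 \<inter> S2)). AE \<omega> in M. \<omega> \<in> A \<longleftrightarrow> \<omega> \<in> C"
proof -
  interpret lborel_product: product_sigma_finite "\<lambda>_ :: nat. lborel :: real measure"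
    by (simp add: product_sigma_finite_def lborel.sigma_finite_measure_axioms)
  let ?L = "\<lambda>S. PiM S (\<lambda>_ :: nat. lborel :: real measure)"
  let ?V = "feature_vec X {..<d}"
  have S_Int: "S1 \<inter> S2 \<subseteq> {..<d}"
    using S by auto
  have [measurable]: "(\<lambda>x. restrict x S1) \<in> measurable (?L {..<d}) (?L S1)"
    "(\<lambda>x. restrict x S2) \<in> measurable (?L {..<d}) (?L S2)"
    "(\<lambda>x. restrict x (S1 \<inter> S2)) \<in> measurable (?L {..<d}) (?L (S1 \<inter> S2))"
    using S by (auto intro!: measurable_restrict_subset)
  obtain A' where A' [measurable]: "A' \<in> sets (?L S1)"
    and A_eq: "A = {\<omega> \<in> space M. restrict (?V \<omega>) S1 \<in> A'}"
    using A sets_feat_alg_restrict[OF S(1)] by auto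
  obtain B' where B' [measurable]: "B' \<in> sets (?L S2)"
    and B_eq: "B = {\<omega> \<in> space M. restrict (?V \<omega>) S2 \<in> B'}"
    using B sets_feat_alg_restrict[OF S(2)] by auto
  have "AE \<omega> in M. restrict (?V \<omega>) S1 \<in> A' \<longleftrightarrow> restrict (?V \<omega>) S2 \<in> B'"
    using AB AE_space by eventually_elim (simp add: A_eq B_eq)
  then have "AE x in ?L {..<d}. x \<in> support_box \<longrightarrow> (restrict x S1 \<in> A' \<longleftrightarrow> restrict x S2 \<in> B')"
    by (subst (asm) AE_feature_vec_iff) measurable
  then obtain C' where C' [measurable]: "C' \<in> sets (?L (S1 \<inter> S2))" and C'_AE:
    "AE x in ?L {..<d}. x \<in> support_box \<longrightarrow> (restrict x S1 \<in> A' \<longleftrightarrow> restrict x (S1 \<inter> S2) \<in> C')"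
    using lborel_product.AE_PiE_restrict_iff_Int[where K = "\<lambda>j. rv_support M (X j)",
        OF finite_lessThan S _ _ A' B'] sets_rv_support emeasure_rv_support_nonzero
    by auto
  from C'_AE have "AE \<omega> in M. restrict (?V \<omega>) S1 \<in> A' \<longleftrightarrow> restrict (?V \<omega>) (S1 \<inter> S2) \<in> C'"
    by (subst AE_feature_vec_iff) measurable
  then have "AE \<omega> in M. \<omega> \<in> A \<longleftrightarrow> \<omega> \<in> {\<omega> \<in> space M. restrict (?V \<omega>) (S1 \<inter> S2) \<in> C'}"
    using AE_space by eventually_elim (simp add: A_eq)
  moreover have "{\<omega> \<in> space M. restrict (?V \<omega>) (S1 \<inter> S2) \<in> C'} \<in> sets (feat_alg M X (S1 \<inter> S2))"
    using C' by (auto simp: sets_feat_alg_restrict[OF S_Int])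
  ultimately show ?thesis
    by blast
qed

lemma stable_set_Int:
  assumes Y: "integrable M Y" and S1: "stable_set M X d Y S1" and S2: "stable_set M X d Y S2"
  shows "stable_set M X d Y (S1 \<inter> S2)"
proof -
  let ?F = "feat_alg M X"
  have S: "S1 \<subseteq> {..<d}" "S2 \<subseteq> {..<d}"
    using S1 S2 by (auto simp: stable_set_def)
  have sub: "subalgebra M (?F S)" if "S \<subseteq> {..<d}" for S
    using that X_measurable by (intro subalgebra_feat_alg) auto
  have finite_sub: "finite_measure_subalgebra M (?F S)" if "S \<subseteq> {..<d}" for S
    using finite_measure_axioms sub[OF that]
    by (simp add: finite_measure_subalgebra_def finite_measure_subalgebra_axioms_def)
  interpret F1: finite_measure_subalgebra M "?F S1"
    using S by (intro finite_sub)
  interpret F_Int: finite_measure_subalgebra M "?F (S1 \<inter> S2)"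
    using S by (intro finite_sub) auto
  define Z1 where "Z1 = real_cond_exp M (?F S1) Y"
  define Z2 where "Z2 = real_cond_exp M (?F S2) Y"
  have Z1_full: "AE \<omega> in M. Z1 \<omega> = real_cond_exp M (?F {..<d}) Y \<omega>"
    using S1 by (simp add: stable_set_def Z1_def)
  have Z2_full: "AE \<omega> in M. Z2 \<omega> = real_cond_exp M (?F {..<d}) Y \<omega>"
    using S2 by (simp add: stable_set_def Z2_def)
  have "\<exists>C \<in> sets (?F (S1 \<inter> S2)). AE \<omega> in M. Z1 \<omega> \<in> B \<longleftrightarrow> \<omega> \<in> C" if "B \<in> sets borel" for B
  proof -
    have "Z1 -` B \<inter> space M \<in> sets (?F S1)" "Z2 -` B \<inter> space M \<in> sets (?F S2)"
      using measurable_sets[OF borel_measurable_cond_exp that, of M "?F S1" Y]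
        measurable_sets[OF borel_measurable_cond_exp that, of M "?F S2" Y]
      by (simp_all add: Z1_def Z2_def)
    moreover have "AE \<omega> in M. \<omega> \<in> Z1 -` B \<inter> space M \<longleftrightarrow> \<omega> \<in> Z2 -` B \<inter> space M"
      using Z1_full Z2_full by eventually_elim auto
    ultimately obtain C where "C \<in> sets (?F (S1 \<inter> S2))"
      and "AE \<omega> in M. \<omega> \<in> Z1 -` B \<inter> space M \<longleftrightarrow> \<omega> \<in> C"
      using feat_alg_Int_AE_eq[OF S] by blast
    moreover from this(2) have "AE \<omega> in M. Z1 \<omega> \<in> B \<longleftrightarrow> \<omega> \<in> C"
      using AE_space by eventually_elim auto
    ultimately show ?thesis
      by blast
  qed
  moreover have "integrable M Z1"
    unfolding Z1_def using Y by (rule F1.real_cond_exp_int(1))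
  ultimately have "AE \<omega> in M. real_cond_exp M (?F (S1 \<inter> S2)) Z1 \<omega> = Z1 \<omega>"
    using F_Int.real_cond_exp_F_meas_AE by blast
  moreover have
    "AE \<omega> in M. real_cond_exp M (?F (S1 \<inter> S2)) Z1 \<omega> = real_cond_exp M (?F (S1 \<inter> S2)) Y \<omega>"
    unfolding Z1_def using S X_measurable
    by (intro F_Int.real_cond_exp_nested_subalg sub subalgebra_feat_alg_mono Y) auto
  ultimately have "AE \<omega> in M. real_cond_exp M (?F (S1 \<inter> S2)) Y \<omega> = real_cond_exp M (?F {..<d}) Y \<omega>"
    using Z1_full by eventually_elim simp
  then show ?thesis
    using S by (auto simp: stable_set_def)
qed

end

theorem lemma2:
  fixes M :: "'a measure" and X :: "nat \<Rightarrow> 'a \<Rightarrow> real" and Y :: "'a \<Rightarrow> real"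
    and d :: nat and S1 S2 :: "nat set"
    and q :: "(nat \<Rightarrow> real) \<times> real \<Rightarrow> ennreal" and p :: "(nat \<Rightarrow> real) \<Rightarrow> ennreal"
  assumes "prob_space M"
    and "\<And>j. j < d \<Longrightarrow> X j \<in> borel_measurable M"
    and "integrable M Y"
    and joint_density: "distributed M (PiM {..<d} (\<lambda>_. lborel) \<Otimes>\<^sub>M lborel)
                          (\<lambda>\<omega>. (feature_vec X {..<d} \<omega>, Y \<omega>)) q"
    and X_density: "distributed M (PiM {..<d} (\<lambda>_. lborel)) (feature_vec X {..<d}) p"
    and positivity: "\<forall>x \<in> PiE {..<d} (\<lambda>j. rv_support M (X j)). p x > 0"
    and "stable_set M X d Y S1"
    and "stable_set M X d Y S2"
  shows "stable_set M X d Y (S1 \<inter> S2)"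
proof -
  interpret positive_feature_density M X d p
    using assms(1,2) X_density positivity
    by (simp add: positive_feature_density_def positive_feature_density_axioms_def)
  show ?thesis
    using assms(3,7,8) by (rule stable_set_Int)
qed

end
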